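(* Let $X$ be a quasi-Polish space and $E$ an equivalence relation on $X$ such that the $E$-saturation of every open set $U\subseteq X$ is open. Define $x\preccurlyeq_E y$ iff $x\in\overline{[y]_E}$, and $x\approx_E y$ iff $x\preccurlyeq_E y$ and $y\preccurlyeq_E x$. Then the $T_0$-quotient $X/\!/E$ of the quotient space $X/E$ is a quasi-Polish space; the projection $p:X\to X/\!/E$ is continuous and open with kernel $x\approx_E y\iff\overline{[x]_E}=\overline{[y]_E}$ (so $X/\!/E$ may be identified with $X/{\approx_E}$); the specialization order of $X/\!/E$ is given by $[x]_{\approx_E}\le[y]_{\approx_E}\iff x\in\overline{[y]_E}$; and $p$ has a Borel section, i.e. $\approx_E$ has a Borel selector.
   Context: A quasi-Polish space is a topological space homeomorphic to a $\mathbf\Pi^0_2$ subset of $\mathbb S^{\mathbb N}$, where $\mathbb S=\{0<1\}$ is the Sierpiński space ($\{1\}$ open, $\{0\}$ not open), and $\mathbf\Pi^0_2$ means a countable intersection of sets of the form $U\cup F$ with $U$ open and $F$ closed. The specialization preorder of a space is $x\lesssim y\iff x\in\overline{\{y\}}$; the $T_0$-quotient identifies points with the same closure (i.e. equivalent under the symmetric part of this preorder), with the quotient topology. Quasi-Polish spaces carry a standard Borel structure. *)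

theory Defs
  imports "HOL-Analysis.Analysis"
begin

definition sierpinski_space :: "bool topology" where
  "sierpinski_space = topology (\<lambda>U. U = {} \<or> U = {True} \<or> U = UNIV)"

definition Pi02_in :: "'a topology \<Rightarrow> 'a set \<Rightarrow> bool" where
  "Pi02_in X A \<longleftrightarrow> (\<exists>U F :: nat \<Rightarrow> 'a set.
      (\<forall>n. openin X (U n) \<and> closedin X (F n)) \<and> A = topspace X \<inter> (\<Inter>n. U n \<union> F n))"

definition quasi_Polish :: "'a topology \<Rightarrow> bool" where
  "quasi_Polish X \<longleftrightarrow>
     (\<exists>A. Pi02_in (product_topology (\<lambda>_::nat. sierpinski_space) UNIV) A \<and>
          X homeomorphic_space subtopology (product_topology (\<lambda>_::nat. sierpinski_space) UNIV) A)"

definition quotient_topology :: "'a topology \<Rightarrow> ('a \<Rightarrow> 'b) \<Rightarrow> 'b topology" where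
  "quotient_topology X f =
     topology (\<lambda>U. U \<subseteq> f ` topspace X \<and> openin X {x \<in> topspace X. f x \<in> U})"

definition spec_le :: "'a topology \<Rightarrow> 'a \<Rightarrow> 'a \<Rightarrow> bool" where
  "spec_le X x y \<longleftrightarrow> x \<in> topspace X \<and> y \<in> topspace X \<and> x \<in> X closure_of {y}"

definition t0_class :: "'a topology \<Rightarrow> 'a \<Rightarrow> 'a set" where
  "t0_class X x = {y \<in> topspace X. X closure_of {y} = X closure_of {x}}"

definition t0_quotient :: "'a topology \<Rightarrow> 'a set topology" where
  "t0_quotient X = quotient_topology X (t0_class X)"

definition equiv_quotient_space :: "'a topology \<Rightarrow> 'a rel \<Rightarrow> 'a set topology" where
  "equiv_quotient_space X E = quotient_topology X (\<lambda>x. E `` {x})"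

definition t0_equiv_quotient :: "'a topology \<Rightarrow> 'a rel \<Rightarrow> 'a set set topology" where
  "t0_equiv_quotient X E = t0_quotient (equiv_quotient_space X E)"

definition t0_equiv_proj :: "'a topology \<Rightarrow> 'a rel \<Rightarrow> 'a \<Rightarrow> 'a set set" where
  "t0_equiv_proj X E x = t0_class (equiv_quotient_space X E) (E `` {x})"

definition borel_of_top :: "'a topology \<Rightarrow> 'a measure" where
  "borel_of_top X = sigma (topspace X) {U. openin X U}"

end

theory Submission
  imports Defs "HOL-Library.Nat_Bijection"
begin

(* Identify X with a Pi^0_2 subset A of S^N via a homeomorphism h. The preimages of the
   cylinders of S^N form a countable base of X, and since p is open their images V_L form
   a countable base of the T0-space Q. Coding q by the set of L with q \<in> V_L therefore embeds
   Q into S^N, and its image is cut out by four closure conditions, each of which is the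
   union of an open and a closed set. Conversely, from such a code one builds, by a
   bookkeeping construction that serves every requirement infinitely often, an increasing
   sequence of finite sets of coordinates whose union is a point of A realizing the code.
   Run on the code of q, this construction depends measurably on q; this gives the Borel
   section. *)

section \<open>The Sierpinski cube\<close>

lemma istopology_sierpinski: "istopology (\<lambda>U::bool set. U = {} \<or> U = {True} \<or> U = UNIV)"
  unfolding istopology_def
proof (intro conjI allI impI)
  fix K :: "bool set set"
  assume K: "\<forall>S\<in>K. S = {} \<or> S = {True} \<or> S = UNIV"
  show "\<Union>K = {} \<or> \<Union>K = {True} \<or> \<Union>K = UNIV"
  proof (cases "UNIV \<in> K")
    case False
    then have "\<Union>K \<subseteq> {True}" using K by auto
    then show ?thesis by (metis subset_singletonD)
  qed auto
qed auto

lemma openin_sierpinski_space: "openin sierpinski_space U \<longleftrightarrow> U = {} \<or> U = {True} \<or> U = UNIV"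
  unfolding sierpinski_space_def by (simp add: topology_inverse'[OF istopology_sierpinski])

lemma topspace_sierpinski_space [simp]: "topspace sierpinski_space = UNIV"
  unfolding topspace_def openin_sierpinski_space by auto

lemma continuous_map_sierpinski_space_iff:
  "continuous_map Y sierpinski_space f \<longleftrightarrow> openin Y {y \<in> topspace Y. f y}"
proof
  assume "continuous_map Y sierpinski_space f"
  then have "openin Y {y \<in> topspace Y. f y \<in> {True}}"
    using openin_continuous_map_preimage openin_sierpinski_space by blast
  then show "openin Y {y \<in> topspace Y. f y}" by simp
next
  assume "openin Y {y \<in> topspace Y. f y}"
  then show "continuous_map Y sierpinski_space f"
    by (auto simp: continuous_map_def openin_sierpinski_space)
qed

abbreviation sierpinski_cube :: "(nat \<Rightarrow> bool) topology" where
  "sierpinski_cube \<equiv> product_topology (\<lambda>_. sierpinski_space) UNIV"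

lemma topspace_sierpinski_cube [simp]: "topspace sierpinski_cube = UNIV"
  by (auto simp: PiE_def extensional_def)

definition cylinder :: "nat list \<Rightarrow> (nat \<Rightarrow> bool) set" where
  "cylinder L = {x. \<forall>m\<in>set L. x m}"

lemma cylinder_antimono: "set K \<subseteq> set L \<Longrightarrow> cylinder L \<subseteq> cylinder K"
  by (auto simp: cylinder_def)

lemma cylinder_append: "cylinder (K @ L) = cylinder K \<inter> cylinder L"
  by (auto simp: cylinder_def)

lemma openin_cylinder: "openin sierpinski_cube (cylinder L)"
  unfolding openin_product_topology_alt
proof
  fix x assume x: "x \<in> cylinder L"
  define W where "W i = (if i \<in> set L then {True} else UNIV)" for i
  have "finite {i. W i \<noteq> UNIV}"
    by (rule finite_subset[of _ "set L"]) (auto simp: W_def)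
  moreover have "openin sierpinski_space (W i)" for i
    by (simp add: W_def openin_sierpinski_space)
  moreover have "x \<in> Pi\<^sub>E UNIV W" "Pi\<^sub>E UNIV W \<subseteq> cylinder L"
    using x by (auto simp: W_def cylinder_def PiE_def Pi_def)
  ultimately show "\<exists>W. finite {i \<in> UNIV. W i \<noteq> topspace sierpinski_space} \<and>
      (\<forall>i\<in>UNIV. openin sierpinski_space (W i)) \<and> x \<in> Pi\<^sub>E UNIV W \<and> Pi\<^sub>E UNIV W \<subseteq> cylinder L"
    by auto
qed

lemma openin_sierpinski_cube_coordinate: "openin sierpinski_cube {x. x k}"
  using openin_cylinder[of "[k]"] by (simp add: cylinder_def)

lemma closedin_sierpinski_cube_not_coordinate: "closedin sierpinski_cube {x. \<not> x k}"
  using closedin_diff[OF closedin_topspace openin_sierpinski_cube_coordinate, of k]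
  by (simp add: Collect_neg_eq Compl_eq_Diff_UNIV)

lemma sierpinski_cube_cylinder_base:
  assumes "openin sierpinski_cube W" "x \<in> W"
  obtains L where "x \<in> cylinder L" "cylinder L \<subseteq> W"
proof -
  obtain V where fin: "finite {i. V i \<noteq> UNIV}"
    and V: "\<And>i. openin sierpinski_space (V i)" and xV: "x \<in> Pi\<^sub>E UNIV V"
    and VW: "Pi\<^sub>E UNIV V \<subseteq> W"
    using assms unfolding openin_product_topology_alt by auto
  obtain L where L: "set L = {i. V i \<noteq> UNIV}"
    using fin finite_list by blast
  have V_proper: "V i = {True}" if "V i \<noteq> UNIV" for i
    using that V[of i] xV by (auto simp: openin_sierpinski_space)
  have "x i" if "V i \<noteq> UNIV" for i
    using xV V_proper[OF that] by auto
  then have "x \<in> cylinder L" by (auto simp: cylinder_def L)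
  moreover have "cylinder L \<subseteq> Pi\<^sub>E UNIV V"
  proof
    fix y assume y: "y \<in> cylinder L"
    have "y i \<in> V i" for i
      using y V_proper[of i] by (cases "V i = UNIV") (auto simp: cylinder_def L)
    then show "y \<in> Pi\<^sub>E UNIV V" by auto
  qed
  ultimately show ?thesis using that VW by blast
qed

section \<open>Quotient topologies\<close>

lemma istopology_quotient:
  "istopology (\<lambda>U. U \<subseteq> f ` topspace X \<and> openin X {x \<in> topspace X. f x \<in> U})"
  unfolding istopology_def
proof (rule conjI; intro allI impI)
  fix S T
  assume "S \<subseteq> f ` topspace X \<and> openin X {x \<in> topspace X. f x \<in> S}"
    "T \<subseteq> f ` topspace X \<and> openin X {x \<in> topspace X. f x \<in> T}"
  moreover have "{x \<in> topspace X. f x \<in> S \<inter> T} =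
      {x \<in> topspace X. f x \<in> S} \<inter> {x \<in> topspace X. f x \<in> T}" by auto
  ultimately show "S \<inter> T \<subseteq> f ` topspace X \<and> openin X {x \<in> topspace X. f x \<in> S \<inter> T}"
    by auto
next
  fix K
  assume "\<forall>S\<in>K. S \<subseteq> f ` topspace X \<and> openin X {x \<in> topspace X. f x \<in> S}"
  moreover have "{x \<in> topspace X. f x \<in> \<Union>K} = (\<Union>S\<in>K. {x \<in> topspace X. f x \<in> S})" by auto
  ultimately show "\<Union>K \<subseteq> f ` topspace X \<and> openin X {x \<in> topspace X. f x \<in> \<Union>K}"
    by auto
qed

lemma openin_quotient_topology:
  "openin (quotient_topology X f) U \<longleftrightarrow> U \<subseteq> f ` topspace X \<and> openin X {x \<in> topspace X. f x \<in> U}"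
  unfolding quotient_topology_def by (simp add: topology_inverse'[OF istopology_quotient])

lemma topspace_quotient_topology [simp]: "topspace (quotient_topology X f) = f ` topspace X"
proof -
  have "{x \<in> topspace X. f x \<in> f ` topspace X} = topspace X" by auto
  then have "openin (quotient_topology X f) (f ` topspace X)"
    by (simp add: openin_quotient_topology)
  moreover have "U \<subseteq> f ` topspace X" if "openin (quotient_topology X f) U" for U
    using that by (simp add: openin_quotient_topology)
  ultimately show ?thesis
    unfolding topspace_def by blast
qed

lemma closure_of_singleton_eq_iff:
  assumes "c \<in> topspace Y" "d \<in> topspace Y"
  shows "Y closure_of {c} = Y closure_of {d} \<longleftrightarrow> c \<in> Y closure_of {d} \<and> d \<in> Y closure_of {c}"
proof
  assume "Y closure_of {c} = Y closure_of {d}"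
  moreover have "c \<in> Y closure_of {c}" "d \<in> Y closure_of {d}"
    using assms closure_of_subset[of "{c}" Y] closure_of_subset[of "{d}" Y] by auto
  ultimately show "c \<in> Y closure_of {d} \<and> d \<in> Y closure_of {c}" by simp
next
  assume "c \<in> Y closure_of {d} \<and> d \<in> Y closure_of {c}"
  then have "Y closure_of {c} \<subseteq> Y closure_of {d}" "Y closure_of {d} \<subseteq> Y closure_of {c}"
    by (simp_all add: closure_of_minimal)
  then show "Y closure_of {c} = Y closure_of {d}" by blast
qed

lemma t0_class_eq_iff:
  assumes "c \<in> topspace Y" "d \<in> topspace Y"
  shows "t0_class Y c = t0_class Y d \<longleftrightarrow> Y closure_of {c} = Y closure_of {d}"
proof
  assume "t0_class Y c = t0_class Y d"
  moreover have "c \<in> t0_class Y c" using assms by (simp add: t0_class_def)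
  ultimately show "Y closure_of {c} = Y closure_of {d}" by (simp add: t0_class_def)
qed (simp add: t0_class_def)

section \<open>\<open>\<Pi>\<^sup>0\<^sub>2\<close> sets\<close>

lemma Pi02_in_open_Un_closed:
  "openin T U \<Longrightarrow> closedin T F \<Longrightarrow> Pi02_in T (topspace T \<inter> (U \<union> F))"
  unfolding Pi02_in_def by (rule exI[of _ "\<lambda>_. U"], rule exI[of _ "\<lambda>_. F"]) auto

lemma Pi02_in_INT:
  fixes S :: "nat \<Rightarrow> 'a set"
  assumes "\<And>n::nat. Pi02_in T (S n)"
  shows "Pi02_in T (\<Inter>n. S n)"
proof -
  have "\<forall>n. \<exists>U F. (\<forall>m::nat. openin T (U m) \<and> closedin T (F m)) \<and>
      S n = topspace T \<inter> (\<Inter>m. U m \<union> F m)"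
    using assms unfolding Pi02_in_def by blast
  then obtain U F :: "nat \<Rightarrow> nat \<Rightarrow> 'a set" where UF: "\<And>n m. openin T (U n m) \<and> closedin T (F n m)"
    and S: "\<And>n. S n = topspace T \<inter> (\<Inter>m. U n m \<union> F n m)"
    by metis
  define U' where "U' k = (case prod_decode k of (n, m) \<Rightarrow> U n m)" for k
  define F' where "F' k = (case prod_decode k of (n, m) \<Rightarrow> F n m)" for k
  have "(\<Inter>n. S n) = topspace T \<inter> (\<Inter>k. U' k \<union> F' k)"
  proof (intro equalityI subsetI)
    fix x assume "x \<in> (\<Inter>n. S n)"
    then show "x \<in> topspace T \<inter> (\<Inter>k. U' k \<union> F' k)"
      by (auto simp: S U'_def F'_def split: prod.split)
  next
    fix x assume x: "x \<in> topspace T \<inter> (\<Inter>k. U' k \<union> F' k)"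
    have "x \<in> U n m \<union> F n m" for n m
      using x by (auto dest!: spec[of _ "prod_encode (n, m)"] simp: U'_def F'_def)
    then show "x \<in> (\<Inter>n. S n)" using x by (auto simp: S)
  qed
  moreover have "openin T (U' k) \<and> closedin T (F' k)" for k
    using UF by (auto simp: U'_def F'_def split: prod.split)
  ultimately show ?thesis unfolding Pi02_in_def by blast
qed

lemma Pi02_in_INT_countable:
  fixes S :: "'c::countable \<Rightarrow> 'a set"
  assumes "\<And>i. Pi02_in T (S i)"
  shows "Pi02_in T (\<Inter>i. S i)"
proof -
  have "(\<Inter>i. S i) = (\<Inter>n. S (from_nat n))"
    by (metis from_nat_to_nat surj_def image_image)
  then show ?thesis using Pi02_in_INT assms by metis
qed

lemma Pi02_in_Int:
  assumes "Pi02_in T S" "Pi02_in T S'"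
  shows "Pi02_in T (S \<inter> S')"
proof -
  have "S \<inter> S' = (\<Inter>b. if b then S else S')"
    by (auto split: if_splits)
  then show ?thesis using Pi02_in_INT_countable[of T "\<lambda>b. if b then S else S'"] assms by auto
qed

lemma Pi02_in_sierpinski_cube_implication:
  "Pi02_in sierpinski_cube {I. (\<forall>k\<in>set ks. I k) \<and> c \<longrightarrow> (\<exists>x\<in>S. I (f x))}"
proof -
  define U where "U = (\<Union>x\<in>S. {I::nat \<Rightarrow> bool. I (f x)})"
  define F where "F = (if c then (\<Union>k\<in>set ks. {I::nat \<Rightarrow> bool. \<not> I k}) else UNIV)"
  have "openin sierpinski_cube U"
    unfolding U_def by (auto intro: openin_sierpinski_cube_coordinate)
  moreover have "closedin sierpinski_cube F"
    unfolding F_def using closedin_topspace[of sierpinski_cube]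
    by (auto intro!: closedin_Union intro: closedin_sierpinski_cube_not_coordinate)
  moreover have "{I. (\<forall>k\<in>set ks. I k) \<and> c \<longrightarrow> (\<exists>x\<in>S. I (f x))} = topspace sierpinski_cube \<inter> (U \<union> F)"
    by (auto simp: U_def F_def)
  ultimately show ?thesis using Pi02_in_open_Un_closed by metis
qed

lemma openin_subset_Pow_topspace: "{U. openin X U} \<subseteq> Pow (topspace X)"
  using openin_subset by blast

lemma space_borel_of_top: "space (borel_of_top X) = topspace X"
  unfolding borel_of_top_def using openin_subset_Pow_topspace by (rule space_measure_of)

lemma openin_in_borel_of_top: "openin X U \<Longrightarrow> U \<in> sets (borel_of_top X)"
  unfolding borel_of_top_def
  by (simp add: sets_measure_of[OF openin_subset_Pow_topspace])

section \<open>Quotients by an equivalence relation with open saturations\<close>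

locale open_equivalence =
  fixes X :: "'a topology" and E :: "'a rel"
  assumes equiv: "equiv (topspace X) E"
    and openin_saturation: "\<And>U. openin X U \<Longrightarrow> openin X (E `` U)"
begin

abbreviation "Q \<equiv> t0_equiv_quotient X E"
abbreviation "p \<equiv> t0_equiv_proj X E"

definition below :: "'a \<Rightarrow> 'a \<Rightarrow> bool" (infix \<open>\<preceq>\<close> 50) where
  "x \<preceq> y \<longleftrightarrow> x \<in> X closure_of (E `` {y})"

lemma E_subset: "E \<subseteq> topspace X \<times> topspace X"
  using equiv by (auto simp: equiv_def refl_on_def)

lemma E_sym: "(x, y) \<in> E \<Longrightarrow> (y, x) \<in> E"
  using equiv by (auto elim: equivE dest: symD)

lemma E_trans: "(x, y) \<in> E \<Longrightarrow> (y, z) \<in> E \<Longrightarrow> (x, z) \<in> E"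
  using equiv by (auto elim: equivE dest: transD)

lemma in_saturation_iff: "y \<in> E `` U \<longleftrightarrow> (\<exists>z\<in>U. (y, z) \<in> E)"
  using E_sym by blast

lemma openin_equiv_quotient_space:
  "openin (equiv_quotient_space X E) W \<longleftrightarrow>
     W \<subseteq> (\<lambda>x. E `` {x}) ` topspace X \<and> openin X {x \<in> topspace X. E `` {x} \<in> W}"
  unfolding equiv_quotient_space_def by (rule openin_quotient_topology)

lemma topspace_equiv_quotient_space:
  "topspace (equiv_quotient_space X E) = (\<lambda>x. E `` {x}) ` topspace X"
  unfolding equiv_quotient_space_def by simp

lemma topspace_Q: "topspace Q = p ` topspace X"
  unfolding t0_equiv_quotient_def t0_quotient_def t0_equiv_proj_def
  by (simp add: topspace_equiv_quotient_space image_image)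

lemma openin_Q: "openin Q V \<longleftrightarrow> V \<subseteq> p ` topspace X \<and> openin X {x \<in> topspace X. p x \<in> V}"
proof -
  let ?D = "equiv_quotient_space X E"
  have "openin Q V \<longleftrightarrow>
      V \<subseteq> t0_class ?D ` topspace ?D \<and> openin ?D {c \<in> topspace ?D. t0_class ?D c \<in> V}"
    unfolding t0_equiv_quotient_def t0_quotient_def by (rule openin_quotient_topology)
  moreover have "t0_class ?D ` topspace ?D = p ` topspace X"
    by (simp add: topspace_equiv_quotient_space image_image t0_equiv_proj_def)
  moreover have "{x \<in> topspace X. E `` {x} \<in> {c \<in> topspace ?D. t0_class ?D c \<in> V}} =
      {x \<in> topspace X. p x \<in> V}"
    by (auto simp: topspace_equiv_quotient_space t0_equiv_proj_def)
  ultimately show ?thesis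
    by (auto simp: openin_equiv_quotient_space topspace_equiv_quotient_space)
qed

lemma proj_eq_if_E: "(x, y) \<in> E \<Longrightarrow> p x = p y"
  using equiv_class_eq[OF equiv] by (simp add: t0_equiv_proj_def)

lemma below_iff:
  assumes "x \<in> topspace X"
  shows "x \<preceq> y \<longleftrightarrow> (\<forall>U. openin X U \<and> x \<in> U \<longrightarrow> y \<in> E `` U)"
  unfolding below_def in_closure_of using assms in_saturation_iff by auto

lemma below_topspace: "x \<preceq> y \<Longrightarrow> x \<in> topspace X"
  by (simp add: below_def in_closure_of)

lemma class_preimage_class_image_saturation:
  "{z \<in> topspace X. E `` {z} \<in> (\<lambda>z. E `` {z}) ` (E `` U)} = E `` U"
proof
  show "{z \<in> topspace X. E `` {z} \<in> (\<lambda>z. E `` {z}) ` (E `` U)} \<subseteq> E `` U"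
  proof
    fix z assume "z \<in> {z \<in> topspace X. E `` {z} \<in> (\<lambda>z. E `` {z}) ` (E `` U)}"
    then obtain w where "z \<in> topspace X" "w \<in> E `` U" "E `` {z} = E `` {w}" by auto
    then have "z \<in> E `` {w}" using equiv_class_self[OF equiv] by blast
    with \<open>w \<in> E `` U\<close> show "z \<in> E `` U" using E_trans by blast
  qed
  show "E `` U \<subseteq> {z \<in> topspace X. E `` {z} \<in> (\<lambda>z. E `` {z}) ` (E `` U)}"
    using E_subset by auto
qed

lemma openin_class_image_saturation:
  "openin X U \<Longrightarrow> openin (equiv_quotient_space X E) ((\<lambda>z. E `` {z}) ` (E `` U))"
  unfolding openin_equiv_quotient_space class_preimage_class_image_saturation
  using openin_saturation E_subset by auto

lemma class_in_closure_of_class_iff: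
  assumes x: "x \<in> topspace X" and y: "y \<in> topspace X"
  shows "E `` {y} \<in> equiv_quotient_space X E closure_of {E `` {x}} \<longleftrightarrow> y \<preceq> x"
proof
  assume L: "E `` {y} \<in> equiv_quotient_space X E closure_of {E `` {x}}"
  show "y \<preceq> x" unfolding below_iff[OF y]
  proof (intro allI impI)
    fix U assume U: "openin X U \<and> y \<in> U"
    define T where "T = (\<lambda>z. E `` {z}) ` (E `` U)"
    have "openin (equiv_quotient_space X E) T"
      unfolding T_def using U openin_class_image_saturation by blast
    moreover have "E `` {y} \<in> T" using U y equiv_class_self[OF equiv] by (auto simp: T_def)
    ultimately have "E `` {x} \<in> T" using L unfolding in_closure_of by auto
    then show "x \<in> E `` U" using x class_preimage_class_image_saturation unfolding T_def by blast
  qed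
next
  assume yx: "y \<preceq> x"
  show "E `` {y} \<in> equiv_quotient_space X E closure_of {E `` {x}}"
    unfolding in_closure_of
  proof (intro conjI allI impI)
    show "E `` {y} \<in> topspace (equiv_quotient_space X E)"
      using y by (simp add: topspace_equiv_quotient_space)
    fix T assume T: "E `` {y} \<in> T \<and> openin (equiv_quotient_space X E) T"
    then have "x \<in> E `` {z \<in> topspace X. E `` {z} \<in> T}"
      using yx y unfolding below_iff[OF y] by (auto simp: openin_equiv_quotient_space)
    then obtain z where "E `` {z} \<in> T" "(z, x) \<in> E" by auto
    then show "\<exists>c. c \<in> {E `` {x}} \<and> c \<in> T" using equiv_class_eq[OF equiv] by auto
  qed
qed

lemma proj_eq_iff:
  assumes "x \<in> topspace X" "y \<in> topspace X"
  shows "p x = p y \<longleftrightarrow> x \<preceq> y \<and> y \<preceq> x"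
proof -
  have "E `` {x} \<in> topspace (equiv_quotient_space X E)" "E `` {y} \<in> topspace (equiv_quotient_space X E)"
    using assms by (auto simp: topspace_equiv_quotient_space)
  then show ?thesis
    unfolding t0_equiv_proj_def by (simp add: t0_class_eq_iff closure_of_singleton_eq_iff
        class_in_closure_of_class_iff assms conj_commute)
qed

lemma below_E_left: "x \<preceq> y \<Longrightarrow> (x, x') \<in> E \<Longrightarrow> x' \<preceq> y"
proof -
  assume xy: "x \<preceq> y" and xx': "(x, x') \<in> E"
  then have x: "x \<in> topspace X" and x': "x' \<in> topspace X"
    using below_topspace E_subset by auto
  show "x' \<preceq> y" unfolding below_iff[OF x']
  proof (intro allI impI)
    fix U assume "openin X U \<and> x' \<in> U"
    then have "openin X (E `` U) \<and> x \<in> E `` U" using openin_saturation xx' E_sym by blast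
    then have "y \<in> E `` (E `` U)" using xy below_iff[OF x] by blast
    then show "y \<in> E `` U" using E_trans by blast
  qed
qed

lemma closure_of_class_eq_iff:
  assumes x: "x \<in> topspace X" and y: "y \<in> topspace X"
  shows "X closure_of (E `` {x}) = X closure_of (E `` {y}) \<longleftrightarrow> x \<preceq> y \<and> y \<preceq> x"
proof
  have "E `` {x} \<subseteq> X closure_of (E `` {x})" "E `` {y} \<subseteq> X closure_of (E `` {y})"
    using closure_of_subset E_subset by (metis Image_subset)+
  moreover assume "X closure_of (E `` {x}) = X closure_of (E `` {y})"
  ultimately show "x \<preceq> y \<and> y \<preceq> x"
    using equiv_class_self[OF equiv] x y unfolding below_def by blast
next
  assume "x \<preceq> y \<and> y \<preceq> x"
  then have "E `` {x} \<subseteq> X closure_of (E `` {y})" "E `` {y} \<subseteq> X closure_of (E `` {x})"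
    using below_E_left unfolding below_def by blast+
  then show "X closure_of (E `` {x}) = X closure_of (E `` {y})"
    by (simp add: closure_of_minimal subset_antisym)
qed

lemma proj_preimage_proj_image:
  assumes U: "openin X U"
  shows "{z \<in> topspace X. p z \<in> p ` U} = E `` U"
proof
  show "{z \<in> topspace X. p z \<in> p ` U} \<subseteq> E `` U"
  proof clarify
    fix z u assume z: "z \<in> topspace X" and u: "u \<in> U" and "p z = p u"
    moreover have "u \<in> topspace X" using U u openin_subset by blast
    ultimately have "u \<preceq> z" using proj_eq_iff by blast
    then show "z \<in> E `` U" using below_iff U u below_topspace by blast
  qed
  show "E `` U \<subseteq> {z \<in> topspace X. p z \<in> p ` U}"
    using E_subset proj_eq_if_E E_sym by (fastforce simp: image_iff)
qed

lemma openin_proj_image: "openin X U \<Longrightarrow> openin Q (p ` U)"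
  unfolding openin_Q proj_preimage_proj_image using openin_saturation openin_subset by fastforce

lemma continuous_map_proj: "continuous_map X Q p"
  unfolding continuous_map_def openin_Q topspace_Q by auto

lemma open_map_proj: "open_map X Q p"
  unfolding open_map_def using openin_proj_image by blast

lemma spec_le_proj_iff:
  assumes x: "x \<in> topspace X" and y: "y \<in> topspace X"
  shows "spec_le Q (p x) (p y) \<longleftrightarrow> x \<preceq> y"
proof
  assume xy: "spec_le Q (p x) (p y)"
  show "x \<preceq> y" unfolding below_iff[OF x]
  proof (intro allI impI)
    fix U assume U: "openin X U \<and> x \<in> U"
    then have "p y \<in> p ` U"
      using xy openin_proj_image unfolding spec_le_def in_closure_of by blast
    then show "y \<in> E `` U" using proj_preimage_proj_image U y by blast
  qed
next
  assume xy: "x \<preceq> y"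
  show "spec_le Q (p x) (p y)"
    unfolding spec_le_def in_closure_of topspace_Q
  proof (intro conjI allI impI)
    fix V assume V: "p x \<in> V \<and> openin Q V"
    then have "y \<in> E `` {z \<in> topspace X. p z \<in> V}"
      using xy below_iff[OF x] x by (auto simp: openin_Q)
    then obtain z where "p z \<in> V" "(z, y) \<in> E" by auto
    then show "\<exists>c. c \<in> {p y} \<and> c \<in> V" using proj_eq_if_E by auto
  qed (use x y in auto)
qed

end

section \<open>Realizing neighbourhood filters by points of a \<open>\<Pi>\<^sup>0\<^sub>2\<close> set\<close>

text \<open>A predicate \<open>N\<close> on indices with the
  closure properties of the neighbourhood filter of a point is then realized by \<open>\<pi>\<close> of a point
  of \<open>A\<close>.\<close>

locale pi02_realization =
  fixes U F :: "nat \<Rightarrow> (nat \<Rightarrow> bool) set" and A :: "(nat \<Rightarrow> bool) set"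
    and V :: "nat list \<Rightarrow> 'b set" and \<pi> :: "(nat \<Rightarrow> bool) \<Rightarrow> 'b"
  assumes A_eq: "A = (\<Inter>n. U n \<union> F n)"
    and openin_U: "\<And>n. openin sierpinski_cube (U n)"
    and closedin_F: "\<And>n. closedin sierpinski_cube (F n)"
    and \<pi>_cylinder: "\<And>a L. a \<in> A \<Longrightarrow> a \<in> cylinder L \<Longrightarrow> \<pi> a \<in> V L"
    and \<pi>_neighbourhood: "\<And>a L. a \<in> A \<Longrightarrow> \<pi> a \<in> V L \<Longrightarrow> \<exists>K. a \<in> cylinder K \<and> V K \<subseteq> V L"
    and V_antimono: "\<And>K L. set K \<subseteq> set L \<Longrightarrow> V L \<subseteq> V K"
begin

text \<open>Requirement \<open>2 m\<close> asks to shrink into \<open>V (list_decode m)\<close>, requirement \<open>2 n + 1\<close> to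
  enter \<open>U n\<close>. At stage \<open>j\<close> requirement \<open>fst (prod_decode j)\<close> is served, so each requirement
  is served infinitely often. The least suitable code is taken (rather than \<open>SOME\<close>) so that
  the stages depend measurably on \<open>N\<close>.\<close>

definition serves :: "nat \<Rightarrow> nat list \<Rightarrow> nat list \<Rightarrow> bool" where
  "serves r K L \<longleftrightarrow> set K \<subseteq> set L \<and>
     (if even r then V L \<subseteq> V (list_decode (r div 2)) else cylinder L \<subseteq> U (r div 2))"

primrec stage :: "(nat list \<Rightarrow> bool) \<Rightarrow> nat \<Rightarrow> nat list" where
  "stage N 0 = []"
| "stage N (Suc j) =
     (if \<exists>k. serves (fst (prod_decode j)) (stage N j) (list_decode k) \<and> N (list_decode k)
      then list_decode (LEAST k. serves (fst (prod_decode j)) (stage N j) (list_decode k) \<and> N (list_decode k))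
      else stage N j)"

declare stage.simps(2) [simp del]

definition generic :: "(nat list \<Rightarrow> bool) \<Rightarrow> nat \<Rightarrow> bool" where
  "generic N = (\<lambda>m. \<exists>j. m \<in> set (stage N j))"

lemma generic_in_cylinder_stage: "generic N \<in> cylinder (stage N j)"
  by (auto simp: cylinder_def generic_def)

lemma requirement_served_infinitely_often: "\<exists>j\<ge>j0. fst (prod_decode j) = r"
  by (rule exI[of _ "prod_encode (r, j0)"]) (simp add: le_prod_encode_2)

context
  fixes N :: "nat list \<Rightarrow> bool"
  assumes N_Nil: "N []"
    and N_enter: "\<And>K n. N K \<Longrightarrow> cylinder K \<inter> F n = {} \<Longrightarrow>
                    \<exists>L. set K \<subseteq> set L \<and> cylinder L \<subseteq> U n \<and> N L"
    and N_shrink: "\<And>K L. N K \<Longrightarrow> N L \<Longrightarrow> \<exists>M. set K \<subseteq> set M \<and> V M \<subseteq> V L \<and> N M"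
    and N_upward: "\<And>K L. N K \<Longrightarrow> V K \<subseteq> V L \<Longrightarrow> N L"
begin

lemma stage_Suc_serves:
  assumes "serves (fst (prod_decode j)) (stage N j) L" "N L"
  shows "serves (fst (prod_decode j)) (stage N j) (stage N (Suc j)) \<and> N (stage N (Suc j))"
proof -
  let ?P = "\<lambda>k. serves (fst (prod_decode j)) (stage N j) (list_decode k) \<and> N (list_decode k)"
  have ex: "\<exists>k. ?P k" using assms by (intro exI[of _ "list_encode L"]) simp
  then show ?thesis using LeastI_ex[OF ex] by (simp add: stage.simps(2))
qed

lemma stage_Suc_cases:
  "stage N (Suc j) = stage N j \<or>
   serves (fst (prod_decode j)) (stage N j) (stage N (Suc j)) \<and> N (stage N (Suc j))"
proof (cases "\<exists>k. serves (fst (prod_decode j)) (stage N j) (list_decode k) \<and> N (list_decode k)")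
  case True
  then show ?thesis using stage_Suc_serves by blast
next
  case False
  then show ?thesis unfolding stage.simps(2) if_not_P[OF False] by simp
qed

lemma N_stage: "N (stage N j)"
proof (induction j)
  case (Suc j)
  then show ?case using stage_Suc_cases[of j] by metis
qed (simp add: N_Nil)

lemma stage_mono: "i \<le> j \<Longrightarrow> set (stage N i) \<subseteq> set (stage N j)"
proof (rule lift_Suc_mono_le)
  show "set (stage N j) \<subseteq> set (stage N (Suc j))" for j
    using stage_Suc_cases[of j] unfolding serves_def by (metis order_refl)
qed

lemma cylinder_generic_within_stage:
  assumes "generic N \<in> cylinder K"
  obtains j where "set K \<subseteq> set (stage N j)"
proof -
  have "\<forall>m\<in>set K. \<exists>j. m \<in> set (stage N j)"
    using assms by (auto simp: cylinder_def generic_def)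
  then obtain f where f: "\<forall>m\<in>set K. m \<in> set (stage N (f m))" by metis
  have "set K \<subseteq> set (stage N (Max (f ` set K)))"
  proof
    fix m assume m: "m \<in> set K"
    then have "f m \<le> Max (f ` set K)" by simp
    then show "m \<in> set (stage N (Max (f ` set K)))" using f m stage_mono by blast
  qed
  then show ?thesis using that by blast
qed

lemma generic_in_A: "generic N \<in> A"
  unfolding A_eq
proof (rule INT_I, rule ccontr)
  fix n
  assume "generic N \<notin> U n \<union> F n"
  then have not_U: "generic N \<notin> U n" and not_F: "generic N \<in> UNIV - F n" by auto
  have "openin sierpinski_cube (UNIV - F n)"
    using closedin_F[of n] by (simp add: closedin_def)
  then obtain K where "generic N \<in> cylinder K" "cylinder K \<subseteq> UNIV - F n"
    by (rule sierpinski_cube_cylinder_base[OF _ not_F])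
  then have K: "generic N \<in> cylinder K" "cylinder K \<inter> F n = {}" by auto
  obtain j0 where j0: "set K \<subseteq> set (stage N j0)" using cylinder_generic_within_stage K(1) by blast
  obtain j where j: "j \<ge> j0" "fst (prod_decode j) = 2 * n + 1"
    using requirement_served_infinitely_often by blast
  have "cylinder (stage N j) \<inter> F n = {}"
    using cylinder_antimono[OF order_trans[OF j0 stage_mono[OF j(1)]]] K(2) by auto
  then obtain L where "set (stage N j) \<subseteq> set L" "cylinder L \<subseteq> U n" "N L"
    using N_enter N_stage by blast
  then have "cylinder (stage N (Suc j)) \<subseteq> U n"
    using stage_Suc_serves[of j L] j(2) by (simp add: serves_def)
  then show False using generic_in_cylinder_stage not_U by blast
qed

lemma N_iff_generic: "N L \<longleftrightarrow> \<pi> (generic N) \<in> V L"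
proof
  assume "N L"
  obtain j where j: "fst (prod_decode j) = 2 * list_encode L"
    using requirement_served_infinitely_often by blast
  obtain M where "set (stage N j) \<subseteq> set M" "V M \<subseteq> V L" "N M"
    using N_shrink N_stage \<open>N L\<close> by blast
  then have "V (stage N (Suc j)) \<subseteq> V L"
    using stage_Suc_serves[of j M] j by (simp add: serves_def)
  then show "\<pi> (generic N) \<in> V L"
    using \<pi>_cylinder generic_in_A generic_in_cylinder_stage by blast
next
  assume "\<pi> (generic N) \<in> V L"
  then obtain K where K: "generic N \<in> cylinder K" "V K \<subseteq> V L"
    using \<pi>_neighbourhood generic_in_A by blast
  then obtain j where "set K \<subseteq> set (stage N j)" using cylinder_generic_within_stage by blast
  then have "V (stage N j) \<subseteq> V L" using V_antimono K(2) by blast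
  then show "N L" using N_upward N_stage by blast
qed

end

end

section \<open>The quotient of a quasi-Polish space\<close>

locale quasi_Polish_open_equivalence = open_equivalence X E for X :: "'a topology" and E +
  fixes A :: "(nat \<Rightarrow> bool) set" and U F :: "nat \<Rightarrow> (nat \<Rightarrow> bool) set"
    and h :: "'a \<Rightarrow> nat \<Rightarrow> bool" and g :: "(nat \<Rightarrow> bool) \<Rightarrow> 'a"
  assumes A_eq: "A = (\<Inter>n. U n \<union> F n)"
    and openin_U: "\<And>n. openin sierpinski_cube (U n)"
    and closedin_F: "\<And>n. closedin sierpinski_cube (F n)"
    and homeomorphic_hg: "homeomorphic_maps X (subtopology sierpinski_cube A) h g"
begin

lemma h_in_A: "z \<in> topspace X \<Longrightarrow> h z \<in> A"
  using homeomorphic_hg by (auto simp: homeomorphic_maps_def continuous_map_def)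

lemma g_in_topspace: "a \<in> A \<Longrightarrow> g a \<in> topspace X"
  using homeomorphic_hg by (auto simp: homeomorphic_maps_def continuous_map_def)

lemma g_h [simp]: "z \<in> topspace X \<Longrightarrow> g (h z) = z"
  using homeomorphic_hg by (auto simp: homeomorphic_maps_def)

lemma h_g [simp]: "a \<in> A \<Longrightarrow> h (g a) = a"
  using homeomorphic_hg by (auto simp: homeomorphic_maps_def)

lemma continuous_map_h: "continuous_map X sierpinski_cube h"
  using homeomorphic_hg unfolding homeomorphic_maps_def continuous_map_in_subtopology by blast

lemma h_image_open:
  assumes "openin X W"
  obtains T where "openin sierpinski_cube T" "h ` W = T \<inter> A"
proof -
  have "homeomorphic_map X (subtopology sierpinski_cube A) h"
    using homeomorphic_hg homeomorphic_maps_map by blast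
  then have "openin (subtopology sierpinski_cube A) (h ` W)"
    using homeomorphic_map_openness assms openin_subset by blast
  then show ?thesis using that unfolding openin_subtopology by blast
qed

definition basic_X :: "nat list \<Rightarrow> 'a set" where
  "basic_X L = {z \<in> topspace X. h z \<in> cylinder L}"

lemma openin_basic_X: "openin X (basic_X L)"
  unfolding basic_X_def using openin_continuous_map_preimage[OF continuous_map_h openin_cylinder] .

lemma basic_X_append: "basic_X (K @ L) = basic_X K \<inter> basic_X L"
  by (auto simp: basic_X_def cylinder_append)

lemma basic_X_base:
  assumes W: "openin X W" and z: "z \<in> W"
  obtains L where "z \<in> basic_X L" "basic_X L \<subseteq> W"
proof -
  obtain T where T: "openin sierpinski_cube T" "h ` W = T \<inter> A" using h_image_open W by blast
  have zX: "z \<in> topspace X" using W z openin_subset by blast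
  obtain L where L: "h z \<in> cylinder L" "cylinder L \<subseteq> T"
    using sierpinski_cube_cylinder_base T z by blast
  have "basic_X L \<subseteq> W"
  proof
    fix w assume w: "w \<in> basic_X L"
    then have "h w \<in> h ` W" using L T(2) h_in_A by (auto simp: basic_X_def)
    then show "w \<in> W" using w W openin_subset by (force simp: basic_X_def dest: g_h)
  qed
  then show ?thesis using that L zX by (auto simp: basic_X_def)
qed

definition basic :: "nat list \<Rightarrow> 'a set set set" where
  "basic L = p ` basic_X L"

lemma openin_basic: "openin Q (basic L)"
  unfolding basic_def using openin_proj_image openin_basic_X by blast

lemma basic_subset_topspace: "basic L \<subseteq> topspace Q"
  using openin_basic openin_subset by blast

lemma basic_base:
  assumes V: "openin Q V" and q: "q \<in> V"
  obtains L where "q \<in> basic L" "basic L \<subseteq> V"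
proof -
  obtain z where z: "z \<in> topspace X" "q = p z" using q V openin_subset topspace_Q by blast
  have "openin X {w \<in> topspace X. p w \<in> V}" using V by (simp add: openin_Q)
  then obtain L where "z \<in> basic_X L" "basic_X L \<subseteq> {w \<in> topspace X. p w \<in> V}"
    using basic_X_base z q by blast
  then show ?thesis using that z by (auto simp: basic_def)
qed

lemma proj_eq_if_same_basic:
  assumes "x \<in> topspace X" "y \<in> topspace X" and same: "\<And>L. p x \<in> basic L \<longleftrightarrow> p y \<in> basic L"
  shows "p x = p y"
proof -
  have "a \<preceq> b" if a: "a \<in> topspace X" and b: "b \<in> topspace X"
    and ab: "\<And>L. p a \<in> basic L \<Longrightarrow> p b \<in> basic L" for a b
    unfolding below_iff[OF a]
  proof (intro allI impI)
    fix W assume "openin X W \<and> a \<in> W"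
    then obtain L where L: "a \<in> basic_X L" "basic_X L \<subseteq> W" using basic_X_base by blast
    then have "p b \<in> basic L" using ab by (auto simp: basic_def)
    then have "b \<in> E `` basic_X L"
      using proj_preimage_proj_image[OF openin_basic_X] b by (auto simp: basic_def)
    then show "b \<in> E `` W" using L(2) by blast
  qed
  then show ?thesis using proj_eq_iff assms by blast
qed

sublocale realization: pi02_realization U F A basic "\<lambda>a. p (g a)"
proof
  show "A = (\<Inter>n. U n \<union> F n)" by (rule A_eq)
  show "openin sierpinski_cube (U n)" for n by (rule openin_U)
  show "closedin sierpinski_cube (F n)" for n by (rule closedin_F)
  show "p (g a) \<in> basic L" if "a \<in> A" "a \<in> cylinder L" for a L
    using that g_in_topspace by (auto simp: basic_def basic_X_def)
  show "basic L \<subseteq> basic K" if "set K \<subseteq> set L" for K L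
    using cylinder_antimono[OF that] by (auto simp: basic_def basic_X_def)
  show "\<exists>K. a \<in> cylinder K \<and> basic K \<subseteq> basic L" if a: "a \<in> A" and aL: "p (g a) \<in> basic L" for a L
  proof -
    have "openin X {w \<in> topspace X. p w \<in> basic L}"
      using openin_basic by (simp add: openin_Q)
    then obtain K where "g a \<in> basic_X K" "basic_X K \<subseteq> {w \<in> topspace X. p w \<in> basic L}"
      using basic_X_base[of _ "g a"] g_in_topspace[OF a] aL by blast
    then show ?thesis using a by (auto simp: basic_X_def basic_def)
  qed
qed

lemma basic_Nil: "q \<in> topspace Q \<Longrightarrow> q \<in> basic []"
  using h_in_A by (auto simp: basic_def basic_X_def cylinder_def topspace_Q)

lemma basic_enter:
  assumes "q \<in> basic K" "cylinder K \<inter> F n = {}"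
  shows "\<exists>L. set K \<subseteq> set L \<and> cylinder L \<subseteq> U n \<and> q \<in> basic L"
proof -
  obtain z where z: "z \<in> basic_X K" "q = p z" using assms(1) by (auto simp: basic_def)
  then have "h z \<in> U n" using h_in_A assms(2) A_eq by (auto simp: basic_X_def)
  then obtain L where "h z \<in> cylinder L" "cylinder L \<subseteq> U n"
    using sierpinski_cube_cylinder_base openin_U by blast
  then show ?thesis
    using z by (intro exI[of _ "K @ L"]) (auto simp: basic_def basic_X_def cylinder_append)
qed

lemma basic_shrink:
  assumes "q \<in> basic K" "q \<in> basic L"
  shows "\<exists>M. set K \<subseteq> set M \<and> basic M \<subseteq> basic L \<and> q \<in> basic M"
proof -
  obtain z where z: "z \<in> basic_X K" "q = p z" using assms(1) by (auto simp: basic_def)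
  have "openin X (basic_X K \<inter> {w \<in> topspace X. p w \<in> basic L})"
    using openin_basic openin_basic_X by (simp add: openin_Q openin_Int)
  moreover have "z \<in> basic_X K \<inter> {w \<in> topspace X. p w \<in> basic L}"
    using z assms(2) by (auto simp: basic_X_def)
  ultimately obtain M where "z \<in> basic_X M" "basic_X M \<subseteq> basic_X K \<inter> {w \<in> topspace X. p w \<in> basic L}"
    by (rule basic_X_base)
  then show ?thesis
    using z by (intro exI[of _ "K @ M"]) (auto simp: basic_def basic_X_append)
qed

definition generic_point :: "'a set set \<Rightarrow> nat \<Rightarrow> bool" where
  "generic_point q = realization.generic (\<lambda>L. q \<in> basic L)"

definition borel_section :: "'a set set \<Rightarrow> 'a" where
  "borel_section q = g (generic_point q)"

lemma generic_point_in_A: "q \<in> topspace Q \<Longrightarrow> generic_point q \<in> A"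
  unfolding generic_point_def
  by (rule realization.generic_in_A[where N="\<lambda>L. q \<in> basic L", OF basic_Nil basic_enter basic_shrink subsetD])

lemma in_basic_iff_proj_borel_section:
  "q \<in> topspace Q \<Longrightarrow> q \<in> basic L \<longleftrightarrow> p (borel_section q) \<in> basic L"
  unfolding generic_point_def borel_section_def
  by (rule realization.N_iff_generic[where N="\<lambda>L. q \<in> basic L", OF basic_Nil basic_enter basic_shrink subsetD])

lemma borel_section_in_topspace: "q \<in> topspace Q \<Longrightarrow> borel_section q \<in> topspace X"
  unfolding borel_section_def using g_in_topspace generic_point_in_A by blast

lemma proj_borel_section: "q \<in> topspace Q \<Longrightarrow> p (borel_section q) = q"
  using proj_eq_if_same_basic[OF borel_section_in_topspace] in_basic_iff_proj_borel_section topspace_Q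
  by fastforce

subsection \<open>Measurability of the section\<close>

lemma pred_in_basic [measurable]: "Measurable.pred (borel_of_top Q) (\<lambda>q. q \<in> basic L)"
  using pred_sets2[OF openin_in_borel_of_top[OF openin_basic] measurable_ident] by simp

lemma measurable_next_stage:
  "(\<lambda>q. if \<exists>k. realization.serves r K (list_decode k) \<and> q \<in> basic (list_decode k)
        then list_decode (LEAST k. realization.serves r K (list_decode k) \<and> q \<in> basic (list_decode k))
        else K) \<in> borel_of_top Q \<rightarrow>\<^sub>M count_space UNIV"
proof (rule measurable_If)
  have "(\<lambda>q. LEAST k. realization.serves r K (list_decode k) \<and> q \<in> basic (list_decode k))
      \<in> borel_of_top Q \<rightarrow>\<^sub>M count_space UNIV"
    by (rule measurable_Least) (auto intro: pred_intros_conj1')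
  then show "(\<lambda>q. list_decode (LEAST k. realization.serves r K (list_decode k) \<and> q \<in> basic (list_decode k)))
      \<in> borel_of_top Q \<rightarrow>\<^sub>M count_space UNIV"
    by (rule measurable_compose) simp
  show "{q \<in> space (borel_of_top Q). \<exists>k. realization.serves r K (list_decode k) \<and> q \<in> basic (list_decode k)}
      \<in> sets (borel_of_top Q)"
    by (rule predE) (auto intro!: pred_intros_countable pred_intros_conj1')
qed simp

lemma measurable_stage:
  "(\<lambda>q. realization.stage (\<lambda>L. q \<in> basic L) j) \<in> borel_of_top Q \<rightarrow>\<^sub>M count_space UNIV"
proof (induction j)
  case (Suc j)
  have "(\<lambda>q. (\<lambda>K q. if \<exists>k. realization.serves (fst (prod_decode j)) K (list_decode k) \<and> q \<in> basic (list_decode k)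
        then list_decode (LEAST k. realization.serves (fst (prod_decode j)) K (list_decode k) \<and>
                                  q \<in> basic (list_decode k))
        else K) (realization.stage (\<lambda>L. q \<in> basic L) j) q) \<in> borel_of_top Q \<rightarrow>\<^sub>M count_space UNIV"
    by (rule measurable_compose_countable'[where I=UNIV, OF measurable_next_stage Suc.IH]) simp
  then show ?case by (simp add: realization.stage.simps(2))
qed simp

lemma pred_generic_point: "Measurable.pred (borel_of_top Q) (\<lambda>q. generic_point q m)"
proof -
  have "Measurable.pred (borel_of_top Q) (\<lambda>q. m \<in> set (realization.stage (\<lambda>L. q \<in> basic L) j))" for j
    using pred_sets2[OF _ measurable_stage, of "{K. m \<in> set K}" j] by simp
  then show ?thesis
    unfolding generic_point_def realization.generic_def by (rule pred_intros_countable(2))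
qed

lemma in_open_iff_cylinder:
  assumes "openin sierpinski_cube T"
  shows "x \<in> T \<longleftrightarrow> (\<exists>K\<in>{K. cylinder K \<subseteq> T}. \<forall>m\<in>set K. x m)"
proof
  assume "x \<in> T"
  then obtain K where "x \<in> cylinder K" "cylinder K \<subseteq> T"
    by (rule sierpinski_cube_cylinder_base[OF assms])
  then show "\<exists>K\<in>{K. cylinder K \<subseteq> T}. \<forall>m\<in>set K. x m" by (auto simp: cylinder_def)
qed (auto simp: cylinder_def)

lemma borel_section_in_open_iff:
  assumes W: "openin X W" and T: "h ` W = T \<inter> A" and q: "q \<in> topspace Q"
  shows "borel_section q \<in> W \<longleftrightarrow> generic_point q \<in> T"
proof -
  have a: "generic_point q \<in> A" using generic_point_in_A[OF q] .
  have "borel_section q \<in> W \<longleftrightarrow> generic_point q \<in> h ` W"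
  proof
    assume "borel_section q \<in> W"
    then show "generic_point q \<in> h ` W" using a unfolding borel_section_def by (metis h_g imageI)
  next
    assume "generic_point q \<in> h ` W"
    then show "borel_section q \<in> W"
      using W openin_subset unfolding borel_section_def by (force dest: g_h)
  qed
  then show ?thesis using T a by blast
qed

lemma measurable_borel_section: "borel_section \<in> borel_of_top Q \<rightarrow>\<^sub>M borel_of_top X"
  unfolding borel_of_top_def[of X]
proof (rule measurable_measure_of)
  show "{U. openin X U} \<subseteq> Pow (topspace X)" by (rule openin_subset_Pow_topspace)
  show "borel_section \<in> space (borel_of_top Q) \<rightarrow> topspace X"
    using borel_section_in_topspace by (auto simp: space_borel_of_top)
  fix W assume "W \<in> {U. openin X U}"
  then obtain T where W: "openin X W" and T: "openin sierpinski_cube T" "h ` W = T \<inter> A"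
    using h_image_open by blast
  have "borel_section -` W \<inter> space (borel_of_top Q) =
      {q \<in> space (borel_of_top Q). \<exists>K\<in>{K. cylinder K \<subseteq> T}. \<forall>m\<in>set K. generic_point q m}"
    using borel_section_in_open_iff[OF W T(2)] in_open_iff_cylinder[OF T(1)]
    by (auto simp: space_borel_of_top)
  moreover have "Measurable.pred (borel_of_top Q)
      (\<lambda>q. \<exists>K\<in>{K. cylinder K \<subseteq> T}. \<forall>m\<in>set K. generic_point q m)"
    using pred_generic_point by (intro pred_intros_countable_bounded) auto
  ultimately show "borel_section -` W \<inter> space (borel_of_top Q) \<in> sets (borel_of_top Q)"
    by (simp add: predE)
qed

subsection \<open>Embedding the quotient into the Sierpinski cube\<close>

definition code :: "'a set set \<Rightarrow> nat \<Rightarrow> bool" where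
  "code q = (\<lambda>k. q \<in> basic (list_decode k))"

definition good_code :: "(nat \<Rightarrow> bool) \<Rightarrow> bool" where
  "good_code I \<longleftrightarrow> I (list_encode []) \<and>
    (\<forall>K n. I (list_encode K) \<and> cylinder K \<inter> F n = {} \<longrightarrow>
       (\<exists>L. set K \<subseteq> set L \<and> cylinder L \<subseteq> U n \<and> I (list_encode L))) \<and>
    (\<forall>K L. I (list_encode K) \<and> I (list_encode L) \<longrightarrow>
       (\<exists>M. set K \<subseteq> set M \<and> basic M \<subseteq> basic L \<and> I (list_encode M))) \<and>
    (\<forall>K L. I (list_encode K) \<and> basic K \<subseteq> basic L \<longrightarrow> I (list_encode L))"

lemma code_list_encode [simp]: "code q (list_encode L) \<longleftrightarrow> q \<in> basic L"
  by (simp add: code_def)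

lemma image_code: "code ` topspace Q = {I. good_code I}"
proof (intro equalityI subsetI)
  fix I assume "I \<in> code ` topspace Q"
  then obtain q where q: "q \<in> topspace Q" and I: "I = code q" by blast
  show "I \<in> {I. good_code I}"
    unfolding mem_Collect_eq good_code_def I code_list_encode
    using basic_Nil[OF q] basic_enter basic_shrink by blast
next
  fix I assume "I \<in> {I. good_code I}"
  then have good: "good_code I" by simp
  have N: "I (list_encode [])"
    "\<And>K n. I (list_encode K) \<Longrightarrow> cylinder K \<inter> F n = {} \<Longrightarrow>
       \<exists>L. set K \<subseteq> set L \<and> cylinder L \<subseteq> U n \<and> I (list_encode L)"
    "\<And>K L. I (list_encode K) \<Longrightarrow> I (list_encode L) \<Longrightarrow>
       \<exists>M. set K \<subseteq> set M \<and> basic M \<subseteq> basic L \<and> I (list_encode M)"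
    "\<And>K L. I (list_encode K) \<Longrightarrow> basic K \<subseteq> basic L \<Longrightarrow> I (list_encode L)"
    using good unfolding good_code_def by blast+
  define a where "a = realization.generic (\<lambda>L. I (list_encode L))"
  have a: "a \<in> A"
    unfolding a_def by (rule realization.generic_in_A[where N="\<lambda>L. I (list_encode L)", OF N])
  have "I (list_encode L) \<longleftrightarrow> p (g a) \<in> basic L" for L
    unfolding a_def by (rule realization.N_iff_generic[where N="\<lambda>L. I (list_encode L)", OF N])
  from this[of "list_decode k" for k] have "code (p (g a)) = I"
    by (simp add: code_def fun_eq_iff)
  moreover have "p (g a) \<in> topspace Q"
    using g_in_topspace[OF a] by (simp add: topspace_Q)
  ultimately show "I \<in> code ` topspace Q" by blast
qed

lemma inj_on_code: "inj_on code (topspace Q)"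
proof
  fix q q' assume q: "q \<in> topspace Q" and q': "q' \<in> topspace Q" and "code q = code q'"
  then have "q \<in> basic L \<longleftrightarrow> q' \<in> basic L" for L
    by (metis code_list_encode)
  then have "p (borel_section q) = p (borel_section q')"
    using q q' by (intro proj_eq_if_same_basic borel_section_in_topspace) (auto simp: proj_borel_section)
  then show "q = q'" using q q' by (simp add: proj_borel_section)
qed

lemma Pi02_in_good_code: "Pi02_in sierpinski_cube {I. good_code I}"
proof -
  have "{I. good_code I} =
      {I. (\<forall>k\<in>set []. I k) \<and> True \<longrightarrow> (\<exists>L\<in>{[]}. I (list_encode L))} \<inter>
      (\<Inter>(K, n). {I. (\<forall>k\<in>set [list_encode K]. I k) \<and> cylinder K \<inter> F n = {} \<longrightarrow>
         (\<exists>L\<in>{L. set K \<subseteq> set L \<and> cylinder L \<subseteq> U n}. I (list_encode L))}) \<inter>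
      (\<Inter>(K, L). {I. (\<forall>k\<in>set [list_encode K, list_encode L]. I k) \<and> True \<longrightarrow>
         (\<exists>M\<in>{M. set K \<subseteq> set M \<and> basic M \<subseteq> basic L}. I (list_encode M))}) \<inter>
      (\<Inter>(K, L). {I. (\<forall>k\<in>set [list_encode K]. I k) \<and> basic K \<subseteq> basic L \<longrightarrow>
         (\<exists>M\<in>{L}. I (list_encode M))})"
    unfolding good_code_def by auto
  then show ?thesis
    by (simp only: split_def) (intro Pi02_in_Int Pi02_in_INT_countable Pi02_in_sierpinski_cube_implication)
qed

lemma continuous_map_code: "continuous_map Q sierpinski_cube code"
  unfolding continuous_map_componentwise_UNIV continuous_map_sierpinski_space_iff
proof
  fix k
  have "{q \<in> topspace Q. code q k} = basic (list_decode k)"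
    using basic_subset_topspace by (auto simp: code_def)
  then show "openin Q {q \<in> topspace Q. code q k}" using openin_basic by simp
qed

lemma open_map_code: "open_map Q (subtopology sierpinski_cube {I. good_code I}) code"
  unfolding open_map_def openin_subtopology
proof (intro allI impI)
  fix W assume W: "openin Q W"
  define T where "T = (\<Union>L\<in>{L. basic L \<subseteq> W}. {I::nat \<Rightarrow> bool. I (list_encode L)})"
  have "openin sierpinski_cube T"
    unfolding T_def by (auto intro: openin_sierpinski_cube_coordinate)
  moreover have "code ` W = T \<inter> {I. good_code I}"
  proof (intro equalityI subsetI)
    fix I assume "I \<in> code ` W"
    then obtain q where q: "q \<in> W" "I = code q" by blast
    obtain L where "q \<in> basic L" "basic L \<subseteq> W" by (rule basic_base[OF W q(1)])
    then have "I \<in> T" unfolding T_def q(2) by auto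
    moreover have "I \<in> {I. good_code I}"
      unfolding image_code[symmetric] using q W openin_subset by blast
    ultimately show "I \<in> T \<inter> {I. good_code I}" by blast
  next
    fix I assume I: "I \<in> T \<inter> {I. good_code I}"
    then have "I \<in> code ` topspace Q" unfolding image_code by blast
    then obtain q where q: "q \<in> topspace Q" "I = code q" by blast
    from I obtain L where "basic L \<subseteq> W" "q \<in> basic L" unfolding T_def q(2) by auto
    then show "I \<in> code ` W" using q(2) by blast
  qed
  ultimately show "\<exists>T. openin sierpinski_cube T \<and> code ` W = T \<inter> {I. good_code I}" by blast
qed

lemma quasi_Polish_Q: "quasi_Polish Q"
proof -
  have "homeomorphic_map Q (subtopology sierpinski_cube {I. good_code I}) code"
    using continuous_map_code image_code
    by (intro bijective_open_imp_homeomorphic_map open_map_code inj_on_code)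
      (auto simp: continuous_map_in_subtopology)
  then show ?thesis
    unfolding quasi_Polish_def using Pi02_in_good_code homeomorphic_map_imp_homeomorphic_space by blast
qed

end

theorem proposition2p1:
  fixes X :: "'a topology" and E :: "'a rel"
  assumes qP: "quasi_Polish X"
    and eq: "equiv (topspace X) E"
    and sat: "\<And>U. openin X U \<Longrightarrow> openin X (E `` U)"
  defines "Q \<equiv> t0_equiv_quotient X E"
    and "p \<equiv> t0_equiv_proj X E"
  shows "quasi_Polish Q
    \<and> continuous_map X Q p
    \<and> open_map X Q p
    \<and> (\<forall>x\<in>topspace X. \<forall>y\<in>topspace X.
           (p x = p y \<longleftrightarrow> X closure_of (E `` {x}) = X closure_of (E `` {y})))
    \<and> (\<forall>x\<in>topspace X. \<forall>y\<in>topspace X.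
           (p x = p y \<longleftrightarrow> (x \<in> X closure_of (E `` {y}) \<and> y \<in> X closure_of (E `` {x}))))
    \<and> (\<forall>x\<in>topspace X. \<forall>y\<in>topspace X.
           (spec_le Q (p x) (p y) \<longleftrightarrow> x \<in> X closure_of (E `` {y})))
    \<and> (\<exists>s. s \<in> borel_of_top Q \<rightarrow>\<^sub>M borel_of_top X \<and> (\<forall>q\<in>topspace Q. p (s q) = q))"
proof -
  interpret open_equivalence X E using eq sat by unfold_locales
  obtain A where "Pi02_in sierpinski_cube A" and hom: "X homeomorphic_space subtopology sierpinski_cube A"
    using qP unfolding quasi_Polish_def by blast
  then obtain U F :: "nat \<Rightarrow> (nat \<Rightarrow> bool) set"
    where UF: "\<forall>n. openin sierpinski_cube (U n) \<and> closedin sierpinski_cube (F n)"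
    and A: "A = topspace sierpinski_cube \<inter> (\<Inter>n. U n \<union> F n)"
    unfolding Pi02_in_def by blast
  obtain h g where "homeomorphic_maps X (subtopology sierpinski_cube A) h g"
    using hom unfolding homeomorphic_space_def by blast
  then interpret quasi_Polish_open_equivalence X E A U F h g
    using UF A by unfold_locales auto
  show ?thesis
    unfolding Q_def p_def below_def[symmetric]
    by (intro conjI ballI exI[of _ borel_section])
      (simp_all add: quasi_Polish_Q continuous_map_proj open_map_proj proj_eq_iff
        closure_of_class_eq_iff spec_le_proj_iff measurable_borel_section proj_borel_section)
qed

end
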